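(* Let $\boldsymbol\tau=(a,b,c,d)\in\mathbb{R}^4$ and $\mu=(p,q,r,s)=\mathrm{GT}(\boldsymbol\tau)$, and suppose $(p,q,r)\neq(0,0,0)$. Then there exists a $\mu$-Markoff map $\phi\in\Phi_\mu$ taking only real values which satisfies the BQ-conditions; i.e. the set $(\Phi_\mu)_Q^{\mathbb{R}}$ of real-valued BQ $\mu$-Markoff maps is non-empty.
   Context: Let $\Sigma$ be a countably infinite simplicial tree, properly embedded in the plane, all of whose vertices have degree $3$. A complementary region is the closure of a connected component of the complement of $\Sigma$; $\Omega$ is the set of complementary regions, $E(\Sigma)$ the set of edges. Every edge $e$ is the intersection of exactly two regions $X,Y$, and its two endpoints lie on two further regions $Z,W$ respectively; write $e\leftrightarrow(X,Y;Z,W)$. Three regions meet at each vertex. Fix a coloring $\mathcal C:\Omega\cup E(\Sigma)\to\{1,2,3\}$ such that for every $e\leftrightarrow(X,Y;Z,W)$, $\mathcal C(e)=\mathcal C(Z)=\mathcal C(W)$ and $\mathcal C(e),\mathcal C(X),\mathcal C(Y)$ are pairwise distinct; $\Omega_i$, $E_i$ denote regions/edges of color $i$. For $\mu=(p,q,r,s)$, a $\mu$-Markoff map is $\phi:\Omega\to\mathbb{C}$ such that (i) at every vertex with regions $X\in\Omega_1,Y\in\Omega_2,Z\in\Omega_3$, $x^2+y^2+z^2+xyz=px+qy+rz+s$ where $x=\phi(X)$, etc.; (ii) for $e\in E_1$, $e\leftrightarrow(Y,Z;X,X')$: $\phi(X)+\phi(X')=p-\phi(Y)\phi(Z)$; for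 $e\in E_2$, $e\leftrightarrow(X,Z;Y,Y')$: $\phi(Y)+\phi(Y')=q-\phi(X)\phi(Z)$; for $e\in E_3$, $e\leftrightarrow(X,Y;Z,Z')$: $\phi(Z)+\phi(Z')=r-\phi(X)\phi(Y)$. $\Phi_\mu$ is the set of such maps. Arrows: given $\phi$ and an edge $e\leftrightarrow(X,Y;Z,W)$, orient $e$ towards its endpoint on $W$ if $|\phi(Z)|>|\phi(W)|$, towards its endpoint on $Z$ if $|\phi(Z)|<|\phi(W)|$, arbitrarily (fixed) if equal; a sink is a vertex at which all three edges point towards it. $\Omega_\phi(k)=\{X:|\phi(X)|\le k\}$. $\mathrm{GT}(a,b,c,d)=(ab+cd,\,ad+bc,\,ac+bd,\,4-a^2-b^2-c^2-d^2-abcd)$. $\alpha=\max\{|p|,|q|,|r|\}/2$. $\mathcal S_\mu$ is the set of all roots of $x^2-uvx+u^2+v^2-4$ where $\{u,v\}$ ranges over pairs of entries of $(a,b,c,d)$ in distinct positions. $M(\mu)=\max\{|(2p_i-xp_j)/(4-x^2)|: x\in\mathcal S_\mu\setminus\{\pm2\}, p_i,p_j\text{ distinct entries among }p,q,r\}$. $m(\mu)>0$ is a fixed constant such that for every $\phi\in\Phi_\mu$ and every sink, the three regions meeting at it have $\min|\phi|\le m(\mu)$. $L(\mu)=\max\{2+\alpha,m(\mu),M(\mu)+1\}$. $\phi$ satisfies the BQ-conditions if $\phi(X)\notin[-2,2]$ for all $X\in\Omega$ and $\Omega_\phi(L(\mu))$ is finite. *)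

theory Defs
  imports Complex_Main
begin

text \<open>Up to homeomorphism of the plane there is a unique countably infinite simplicial
tree, properly embedded in the plane, all of whose vertices have degree 3.  We use the
standard concrete model: it is the dual tree of the Farey tessellation.  Complementary
regions correspond to extended rationals p/q (reduced, q > 0, together with 1/0 = infinity);
two regions share an edge iff |p s - q r| = 1; the vertices of Sigma correspond to the
triples of pairwise adjacent regions (the three regions meeting at the vertex).\<close>

type_synonym region = "int \<times> int"

definition Omega :: "region set" where
  "Omega = {(p, q). coprime p q \<and> (q > 0 \<or> (p = 1 \<and> q = 0))}"

definition adj :: "region \<Rightarrow> region \<Rightarrow> bool" where
  "adj X Y \<longleftrightarrow> X \<in> Omega \<and> Y \<in> Omega \<and> \<bar>fst X * snd Y - snd X * fst Y\<bar> = 1"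

definition is_vertex :: "region set \<Rightarrow> bool" where
  "is_vertex v \<longleftrightarrow> (\<exists>X Y Z. v = {X, Y, Z} \<and> adj X Y \<and> adj Y Z \<and> adj X Z)"

text \<open>Edges of Sigma, identified with the set of the two regions X, Y whose intersection it is.\<close>
definition Edges :: "region set set" where
  "Edges = {{X, Y} | X Y. adj X Y}"

text \<open>e <-> (X,Y;Z,W): the edge e = X \<inter> Y has its endpoints on Z and W, i.e. its endpoints
are the vertices {X,Y,Z} and {X,Y,W}.\<close>
definition edge_rel :: "region \<Rightarrow> region \<Rightarrow> region \<Rightarrow> region \<Rightarrow> bool" where
  "edge_rel X Y Z W \<longleftrightarrow> is_vertex {X, Y, Z} \<and> is_vertex {X, Y, W} \<and> Z \<noteq> W"

definition valid_coloring :: "(region \<Rightarrow> nat) \<Rightarrow> (region set \<Rightarrow> nat) \<Rightarrow> bool" where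
  "valid_coloring col ecol \<longleftrightarrow>
     (\<forall>X\<in>Omega. col X \<in> {1, 2, 3}) \<and> (\<forall>e\<in>Edges. ecol e \<in> {1, 2, 3}) \<and>
     (\<forall>X Y Z W. edge_rel X Y Z W \<longrightarrow>
        ecol {X, Y} = col Z \<and> col Z = col W \<and>
        ecol {X, Y} \<noteq> col X \<and> ecol {X, Y} \<noteq> col Y \<and> col X \<noteq> col Y)"

definition markoff_map ::
  "complex \<times> complex \<times> complex \<times> complex \<Rightarrow> (region \<Rightarrow> nat) \<Rightarrow> (region set \<Rightarrow> nat)
     \<Rightarrow> (region \<Rightarrow> complex) \<Rightarrow> bool" where
  "markoff_map mu col ecol \<phi> \<longleftrightarrow>
     (case mu of (p, q, r, s) \<Rightarrow>
       (\<forall>X Y Z. is_vertex {X, Y, Z} \<and> col X = 1 \<and> col Y = 2 \<and> col Z = 3 \<longrightarrow>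
          (\<phi> X)\<^sup>2 + (\<phi> Y)\<^sup>2 + (\<phi> Z)\<^sup>2 + \<phi> X * \<phi> Y * \<phi> Z
            = p * \<phi> X + q * \<phi> Y + r * \<phi> Z + s) \<and>
       (\<forall>Y Z X X'. edge_rel Y Z X X' \<and> ecol {Y, Z} = 1 \<longrightarrow> \<phi> X + \<phi> X' = p - \<phi> Y * \<phi> Z) \<and>
       (\<forall>X Z Y Y'. edge_rel X Z Y Y' \<and> ecol {X, Z} = 2 \<longrightarrow> \<phi> Y + \<phi> Y' = q - \<phi> X * \<phi> Z) \<and>
       (\<forall>X Y Z Z'. edge_rel X Y Z Z' \<and> ecol {X, Y} = 3 \<longrightarrow> \<phi> Z + \<phi> Z' = r - \<phi> X * \<phi> Y))"

text \<open>A tie-breaking rule: for each edge e <-> (X,Y;Z,W), tb e is the one of Z, W towards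
whose endpoint e is oriented in case |phi Z| = |phi W| (arbitrary but fixed).\<close>
definition valid_tiebreak :: "(region set \<Rightarrow> region) \<Rightarrow> bool" where
  "valid_tiebreak tb \<longleftrightarrow> (\<forall>X Y Z W. edge_rel X Y Z W \<longrightarrow> tb {X, Y} \<in> {Z, W})"

text \<open>For e <-> (X,Y;Z,W): the edge e is oriented towards its endpoint on W.\<close>
definition arrow_towards :: "(region \<Rightarrow> complex) \<Rightarrow> (region set \<Rightarrow> region) \<Rightarrow>
    region \<Rightarrow> region \<Rightarrow> region \<Rightarrow> region \<Rightarrow> bool" where
  "arrow_towards \<phi> tb X Y Z W \<longleftrightarrow>
     norm (\<phi> Z) > norm (\<phi> W) \<or> (norm (\<phi> Z) = norm (\<phi> W) \<and> tb {X, Y} = W)"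

text \<open>A sink: a vertex at which all three edges point towards it.  The vertex v = {X,Y,Z}
is the endpoint on Z of the edge e <-> (X,Y;W,Z).\<close>
definition is_sink :: "(region \<Rightarrow> complex) \<Rightarrow> (region set \<Rightarrow> region) \<Rightarrow> region set \<Rightarrow> bool" where
  "is_sink \<phi> tb v \<longleftrightarrow> is_vertex v \<and>
     (\<forall>X Y Z W. v = {X, Y, Z} \<and> edge_rel X Y W Z \<longrightarrow> arrow_towards \<phi> tb X Y W Z)"

definition sink_constant ::
  "complex \<times> complex \<times> complex \<times> complex \<Rightarrow> (region \<Rightarrow> nat) \<Rightarrow> (region set \<Rightarrow> nat)
     \<Rightarrow> real \<Rightarrow> bool" where
  "sink_constant mu col ecol m \<longleftrightarrow> m > 0 \<and>
     (\<forall>\<phi> tb v. markoff_map mu col ecol \<phi> \<and> valid_tiebreak tb \<and> is_sink \<phi> tb v \<longrightarrow>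
        (\<exists>X\<in>v. norm (\<phi> X) \<le> m))"

definition GT :: "complex \<Rightarrow> complex \<Rightarrow> complex \<Rightarrow> complex \<Rightarrow> complex \<times> complex \<times> complex \<times> complex" where
  "GT a b c d = (a * b + c * d, a * d + b * c, a * c + b * d,
                 4 - a\<^sup>2 - b\<^sup>2 - c\<^sup>2 - d\<^sup>2 - a * b * c * d)"

definition alpha :: "complex \<times> complex \<times> complex \<times> complex \<Rightarrow> real" where
  "alpha mu = (case mu of (p, q, r, s) \<Rightarrow> max (norm p) (max (norm q) (norm r)) / 2)"

definition S_set :: "complex \<Rightarrow> complex \<Rightarrow> complex \<Rightarrow> complex \<Rightarrow> complex set" where
  "S_set a b c d = {x. \<exists>i j. i < 4 \<and> j < 4 \<and> i \<noteq> j \<and>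
      x\<^sup>2 - ([a, b, c, d] ! i) * ([a, b, c, d] ! j) * x
        + ([a, b, c, d] ! i)\<^sup>2 + ([a, b, c, d] ! j)\<^sup>2 - 4 = 0}"

text \<open>M(mu); the maximum of the empty set is taken to be 0 (all quantities are nonnegative).\<close>
definition M_const :: "complex \<Rightarrow> complex \<Rightarrow> complex \<Rightarrow> complex \<Rightarrow> real" where
  "M_const a b c d = (case GT a b c d of (p, q, r, s) \<Rightarrow>
     Max (insert 0 {norm ((2 * ([p, q, r] ! i) - x * ([p, q, r] ! j)) / (4 - x\<^sup>2)) | x i j.
        x \<in> S_set a b c d - {2, -2} \<and> i < 3 \<and> j < 3 \<and> i \<noteq> j}))"

definition L_const :: "complex \<Rightarrow> complex \<Rightarrow> complex \<Rightarrow> complex \<Rightarrow> real \<Rightarrow> real" where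
  "L_const a b c d m = max (2 + alpha (GT a b c d)) (max m (M_const a b c d + 1))"

definition BQ :: "(region \<Rightarrow> complex) \<Rightarrow> real \<Rightarrow> bool" where
  "BQ \<phi> L \<longleftrightarrow> (\<forall>X\<in>Omega. \<phi> X \<notin> complex_of_real ` {-2..2}) \<and>
                 finite {X \<in> Omega. norm (\<phi> X) \<le> L}"

end

theory Submission
  imports Defs
begin

text \<open>We model \<open>\<Sigma>\<close> by the Farey tree, whose regions are the extended rationals \<open>p/q\<close>, and
  first build positive values \<open>v > 2\<close> satisfying the Markoff relations with the sign of \<open>xyz\<close>
  reversed.  Put \<open>C \<in> (2, 3]\<close> at \<open>\<infinity>\<close> and \<open>A cosh (n \<theta>) + e\<^sub>0/e\<^sub>1\<close> (by parity) at the integers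
  \<open>n/1\<close>, where \<open>C = 2 cosh \<theta>\<close>; these satisfy the edge relations around \<open>\<infinity>\<close>, and \<open>A\<close> is chosen so
  that the vertex relation holds at \<open>{\<infinity>, 0, 1}\<close>.  Every other \<open>p/q\<close> gets its value from the edge
  relation at the edge between its two Farey parents.  The vertex relation is invariant under
  crossing an edge, hence holds everywhere, and the values grow at least like \<open>\<alpha> \<bar>p\<bar> + \<beta> q\<close>, so
  every sublevel set is finite.  Multiplying by a sign per colour, with product \<open>-1\<close>, gives a real
  \<open>\<mu>\<close>-Markoff map.  This needs a nonzero coefficient on the colour of \<open>0\<close> or \<open>1\<close>; otherwise the
  colour of \<open>\<infinity>\<close> has one, and we first apply the reflection \<open>x \<mapsto> 1/x\<close> of the tree.\<close>

section \<open>The Farey tree\<close>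

definition det2 :: "region \<Rightarrow> region \<Rightarrow> int" where
  "det2 X Y = fst X * snd Y - snd X * fst Y"

definition vsum :: "region \<Rightarrow> region \<Rightarrow> region" where
  "vsum X Y = (fst X + fst Y, snd X + snd Y)"

definition vdiff :: "region \<Rightarrow> region \<Rightarrow> region" where
  "vdiff X Y = (fst X - fst Y, snd X - snd Y)"

definition canon :: "region \<Rightarrow> region" where
  "canon V = (if snd V > 0 \<or> (snd V = 0 \<and> fst V > 0) then V else (- fst V, - snd V))"

lemma adj_sym: "adj X Y \<Longrightarrow> adj Y X"
  unfolding adj_def by (auto simp: abs_minus_commute algebra_simps)

lemma adj_in_Omega: "adj X Y \<Longrightarrow> X \<in> Omega \<and> Y \<in> Omega"
  unfolding adj_def by auto

lemma adj_irrefl: "\<not> adj X X"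
  unfolding adj_def by (auto simp: algebra_simps)

lemma adj_iff_det2: "adj X Y \<longleftrightarrow> X \<in> Omega \<and> Y \<in> Omega \<and> \<bar>det2 X Y\<bar> = 1"
  unfolding adj_def det2_def by auto

lemma adj_infinity_iff: "adj (1, 0) Y \<longleftrightarrow> (\<exists>n. Y = (n, 1))"
  unfolding adj_def Omega_def by auto

lemma Omega_snd_nonneg: "X \<in> Omega \<Longrightarrow> snd X \<ge> 0"
  unfolding Omega_def by auto

lemma Omega_snd_pos: "X \<in> Omega \<Longrightarrow> X \<noteq> (1, 0) \<Longrightarrow> snd X \<ge> 1"
  unfolding Omega_def by (cases X) auto

lemma coprime_if_det:
  fixes a b c d :: int
  assumes "\<bar>a * d - b * c\<bar> = 1"
  shows "coprime a b"
proof (rule coprimeI)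
  fix k assume "k dvd a" "k dvd b"
  then have "k dvd \<bar>a * d - b * c\<bar>" by simp
  then show "is_unit k" using assms by simp
qed

lemma canon_in_Omega:
  assumes "coprime (fst V) (snd V)" "V \<noteq> (0, 0)"
  shows "canon V \<in> Omega"
proof -
  obtain a b where V: "V = (a, b)" by (cases V)
  have "b = 0 \<Longrightarrow> \<bar>a\<bar> = 1" using assms V by simp
  then show ?thesis using assms V unfolding canon_def Omega_def by auto
qed

lemma canon_Omega: "X \<in> Omega \<Longrightarrow> canon X = X"
  unfolding canon_def Omega_def by auto

lemma canon_uminus: "V \<noteq> (0, 0) \<Longrightarrow> canon (- fst V, - snd V) = canon V"
  unfolding canon_def by (cases V) auto

lemma canon_vdiff_commute: "X \<noteq> Y \<Longrightarrow> canon (vdiff Y X) = canon (vdiff X Y)"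
  using canon_uminus[of "vdiff X Y"] unfolding vdiff_def by (cases X, cases Y) auto

lemma snd_canon_vdiff:
  "snd X \<ge> 0 \<Longrightarrow> snd Y \<ge> 0 \<Longrightarrow> snd (canon (vdiff X Y)) = \<bar>snd X - snd Y\<bar>"
  unfolding canon_def vdiff_def by auto

lemma det2_vsum_vdiff:
  "det2 X (vsum X Y) = det2 X Y" "det2 Y (vsum X Y) = - det2 X Y"
  "det2 X (vdiff X Y) = - det2 X Y" "det2 Y (vdiff X Y) = - det2 X Y"
  unfolding det2_def vsum_def vdiff_def by (simp_all add: algebra_simps)

lemma abs_det2_canon: "\<bar>det2 X (canon V)\<bar> = \<bar>det2 X V\<bar>"
  unfolding det2_def canon_def by (auto simp: algebra_simps)

text \<open>Two adjacent regions \<open>X, Y\<close> are the sides of exactly one edge; its two endpoints lie on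
  the regions \<open>X + Y\<close> and \<open>X - Y\<close> (Farey sum and difference).\<close>

lemma common_neighbour:
  assumes xy: "adj X Y" and xz: "adj X Z" and yz: "adj Y Z"
  shows "Z = canon (vsum X Y) \<or> Z = canon (vdiff X Y)"
proof -
  obtain a b where X: "X = (a, b)" by (cases X)
  obtain c d where Y: "Y = (c, d)" by (cases Y)
  obtain e f where Z: "Z = (e, f)" by (cases Z)
  define D where "D = a * d - b * c"
  have D: "D = 1 \<or> D = -1" using xy X Y unfolding adj_def D_def by auto
  then have DD: "D * D = 1" by auto
  text \<open>Cramer's rule: \<open>Z = l X + m Y\<close>, and unimodularity of the pairs forces \<open>l, m = \<plusminus>1\<close>.\<close>
  define l where "l = D * (e * d - f * c)"
  define m where "m = D * (a * f - b * e)"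
  have "l * a + m * c = D * D * e" "l * b + m * d = D * D * f"
    unfolding l_def m_def D_def by (simp_all add: algebra_simps)
  then have ef: "e = l * a + m * c" "f = l * b + m * d" using DD by simp_all
  have "\<bar>a * f - b * e\<bar> = 1" using xz X Z unfolding adj_def by auto
  then have m1: "m = 1 \<or> m = -1" unfolding m_def using D by auto
  have "\<bar>c * f - d * e\<bar> = 1" using yz Y Z unfolding adj_def by auto
  then have l1: "l = 1 \<or> l = -1" unfolding l_def using D by (auto simp: algebra_simps abs_minus_commute)
  have "Z \<in> Omega" using xz adj_in_Omega by blast
  then have Zc: "canon Z = Z" and Z0: "Z \<noteq> (0, 0)" by (auto simp: canon_Omega Omega_def)
  from l1 m1 show ?thesis
  proof (elim disjE)
    assume "l = 1" "m = 1"
    then show ?thesis using ef X Y Z Zc by (simp add: vsum_def)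
  next
    assume "l = 1" "m = -1"
    then show ?thesis using ef X Y Z Zc by (simp add: vdiff_def)
  next
    assume "l = -1" "m = 1"
    then have "Z = (- fst (vdiff X Y), - snd (vdiff X Y))" using ef X Y Z by (simp add: vdiff_def)
    moreover from this have "vdiff X Y \<noteq> (0, 0)" using Z0 by auto
    ultimately have "canon Z = canon (vdiff X Y)" using canon_uminus by simp
    then show ?thesis using Zc by simp
  next
    assume "l = -1" "m = -1"
    then have "Z = (- fst (vsum X Y), - snd (vsum X Y))" using ef X Y Z by (simp add: vsum_def)
    moreover from this have "vsum X Y \<noteq> (0, 0)" using Z0 by auto
    ultimately have "canon Z = canon (vsum X Y)" using canon_uminus by simp
    then show ?thesis using Zc by simp
  qed
qed

lemma neighbours_in_Omega:
  assumes "adj X Y"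
  shows "canon (vsum X Y) \<in> Omega" "canon (vdiff X Y) \<in> Omega"
proof -
  have d: "\<bar>det2 X (vsum X Y)\<bar> = 1" "\<bar>det2 X (vdiff X Y)\<bar> = 1"
    using assms by (auto simp: adj_iff_det2 det2_vsum_vdiff)
  have "coprime (fst V) (snd V) \<and> V \<noteq> (0, 0)" if "\<bar>det2 X V\<bar> = 1" for V
    using that coprime_if_det[of "fst V" "snd X" "snd V" "fst X"]
    unfolding det2_def by (auto simp: algebra_simps abs_minus_commute)
  then show "canon (vsum X Y) \<in> Omega" "canon (vdiff X Y) \<in> Omega"
    using d canon_in_Omega by blast+
qed

lemma neighbours_adj:
  assumes "adj X Y"
  shows "adj X (canon (vsum X Y))" "adj Y (canon (vsum X Y))"
    "adj X (canon (vdiff X Y))" "adj Y (canon (vdiff X Y))"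
  using assms neighbours_in_Omega[OF assms] adj_in_Omega[OF assms]
  by (auto simp: adj_iff_det2 abs_det2_canon det2_vsum_vdiff)

lemma neighbours_distinct:
  assumes "adj X Y"
  shows "canon (vsum X Y) \<noteq> canon (vdiff X Y)"
proof
  assume h: "canon (vsum X Y) = canon (vdiff X Y)"
  have "X \<noteq> (0, 0)" "Y \<noteq> (0, 0)" using adj_in_Omega[OF assms] unfolding Omega_def by auto
  then show False using h unfolding canon_def vsum_def vdiff_def
    by (cases X, cases Y) (auto split: if_splits)
qed

lemma is_vertex_iff_adj: "is_vertex {X, Y, Z} \<longleftrightarrow> adj X Y \<and> adj Y Z \<and> adj X Z"
proof
  assume "is_vertex {X, Y, Z}"
  then obtain A B C where eq: "{X, Y, Z} = {A, B, C}" and h: "adj A B" "adj B C" "adj A C"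
    unfolding is_vertex_def by blast
  have "A \<noteq> B" "B \<noteq> C" "A \<noteq> C" using h adj_irrefl by metis+
  then have "card {X, Y, Z} = 3" using eq by simp
  then have "X \<noteq> Y \<and> Y \<noteq> Z \<and> X \<noteq> Z" by (auto simp: card_insert_if split: if_splits)
  moreover have "X \<in> {A, B, C}" "Y \<in> {A, B, C}" "Z \<in> {A, B, C}" using eq by blast+
  moreover have "adj B A" "adj C B" "adj C A" using h adj_sym by blast+
  ultimately show "adj X Y \<and> adj Y Z \<and> adj X Z" using h by auto
qed (unfold is_vertex_def, blast)

lemma is_vertex_iff_neighbour:
  "is_vertex {X, Y, V} \<longleftrightarrow> adj X Y \<and> V \<in> {canon (vsum X Y), canon (vdiff X Y)}"
proof
  assume "is_vertex {X, Y, V}"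
  then have "adj X Y" "adj X V" "adj Y V" unfolding is_vertex_iff_adj by auto
  then show "adj X Y \<and> V \<in> {canon (vsum X Y), canon (vdiff X Y)}"
    using common_neighbour by blast
next
  assume h: "adj X Y \<and> V \<in> {canon (vsum X Y), canon (vdiff X Y)}"
  then have "adj X V \<and> adj Y V" using neighbours_adj by blast
  then show "is_vertex {X, Y, V}" using h adj_sym unfolding is_vertex_iff_adj by blast
qed

lemma edge_rel_iff:
  "edge_rel X Y Z W \<longleftrightarrow> adj X Y \<and> Z \<in> {canon (vsum X Y), canon (vdiff X Y)} \<and>
     W \<in> {canon (vsum X Y), canon (vdiff X Y)} \<and> Z \<noteq> W"
  using is_vertex_iff_neighbour[of X Y Z] is_vertex_iff_neighbour[of X Y W]
  unfolding edge_rel_def by argo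

lemma edge_rel_in_Omega: "edge_rel X Y Z W \<Longrightarrow> X \<in> Omega \<and> Y \<in> Omega \<and> Z \<in> Omega \<and> W \<in> Omega"
  unfolding edge_rel_def is_vertex_iff_adj using adj_in_Omega by blast

lemma edge_rel_exists:
  assumes "is_vertex {X, Y, Z}"
  shows "\<exists>W. edge_rel X Y Z W"
proof -
  have a: "adj X Y" "adj X Z" "adj Y Z" using assms unfolding is_vertex_iff_adj by auto
  then have "Z = canon (vsum X Y) \<or> Z = canon (vdiff X Y)" by (rule common_neighbour)
  then show ?thesis
  proof
    assume "Z = canon (vsum X Y)"
    then have "edge_rel X Y Z (canon (vdiff X Y))"
      using a(1) neighbours_distinct[OF a(1)] unfolding edge_rel_iff by simp
    then show ?thesis ..
  next
    assume "Z = canon (vdiff X Y)"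
    then have "edge_rel X Y Z (canon (vsum X Y))"
      using a(1) neighbours_distinct[OF a(1)] unfolding edge_rel_iff by simp
    then show ?thesis ..
  qed
qed

lemma edge_rel_infinity: "edge_rel (1, 0) (n + 1, 1) (n + 2, 1) (n, 1)"
  unfolding edge_rel_iff adj_infinity_iff canon_def vsum_def vdiff_def by auto

text \<open>A region \<open>Z = p/q\<close> with \<open>q \<ge> 2\<close> is the Farey sum of its two parents \<open>lparent Z\<close> and
  \<open>rparent Z\<close>, both adjacent to \<open>Z\<close> and to each other; \<open>gparent Z\<close> is the third region at the
  other endpoint of the edge between the parents.  For \<open>q \<le> 1\<close> the values are junk.\<close>

definition is_lparent :: "region \<Rightarrow> region \<Rightarrow> bool" where
  "is_lparent Z X \<longleftrightarrow> 1 \<le> snd X \<and> snd X < snd Z \<and> det2 X Z = -1"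

definition lparent :: "region \<Rightarrow> region" where
  "lparent Z = (if \<exists>X. is_lparent Z X then SOME X. is_lparent Z X else (0, 1))"

definition rparent :: "region \<Rightarrow> region" where
  "rparent Z = vdiff Z (lparent Z)"

definition gparent :: "region \<Rightarrow> region" where
  "gparent Z = canon (vdiff (lparent Z) (rparent Z))"

lemma is_lparent_exists:
  assumes "Z \<in> Omega" "snd Z \<ge> 2"
  shows "\<exists>X. is_lparent Z X"
proof -
  obtain p q where Z: "Z = (p, q)" by (cases Z)
  have "coprime p q" using assms Z unfolding Omega_def by auto
  then obtain u v where uv: "u * p + v * q = 1" using bezout_int[of p q] by auto
  have q: "q \<ge> 2" using assms Z by simp
  define t where "t = u div q"
  define r where "r = u mod q"
  have u: "u = r + q * t" unfolding r_def t_def by simp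
  have r: "0 \<le> r" "r < q" unfolding r_def using q by auto
  have "r \<noteq> 0"
  proof
    assume "r = 0"
    then have "q * (t * p + v) = 1" using uv u by (simp add: algebra_simps)
    then have "q dvd 1" by (metis dvd_triv_left)
    then show False using q by simp
  qed
  moreover have "det2 (- (t * p + v), r) Z = -1" unfolding det2_def Z using uv u
    by (simp add: algebra_simps)
  ultimately have "is_lparent Z (- (t * p + v), r)" unfolding is_lparent_def using r Z by auto
  then show ?thesis by blast
qed

lemma is_lparent_unique:
  assumes "Z \<in> Omega" "is_lparent Z X" "is_lparent Z X'"
  shows "X = X'"
proof -
  obtain p q where Z: "Z = (p, q)" by (cases Z)
  obtain a b where X: "X = (a, b)" by (cases X)
  obtain a' b' where X': "X' = (a', b')" by (cases X')
  have cp: "coprime q p" using assms Z unfolding Omega_def by (auto simp: coprime_commute)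
  have e: "(b - b') * p = (a - a') * q"
    using assms X X' Z unfolding is_lparent_def det2_def by (simp add: algebra_simps)
  then have "q dvd (b - b') * p" by simp
  then have "q dvd (b - b')" using cp coprime_dvd_mult_left_iff by blast
  moreover have "\<bar>b - b'\<bar> < q" using assms X X' Z unfolding is_lparent_def by auto
  ultimately have "b = b'"
    using dvd_imp_le_int[of "b - b'" q] by (cases "b = b'") auto
  moreover have "q \<noteq> 0" using assms X Z unfolding is_lparent_def by auto
  ultimately show ?thesis using e X X' by simp
qed

lemma is_lparent_lparent: "Z \<in> Omega \<Longrightarrow> snd Z \<ge> 2 \<Longrightarrow> is_lparent Z (lparent Z)"
  using is_lparent_exists someI_ex unfolding lparent_def by metis

lemma lparent_eqI:
  assumes "Z \<in> Omega" "is_lparent Z X"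
  shows "lparent Z = X"
proof -
  have "snd Z \<ge> 2" using assms(2) unfolding is_lparent_def by simp
  then show ?thesis using assms is_lparent_lparent is_lparent_unique by blast
qed

lemma snd_parents_less:
  assumes "snd Z \<ge> 2"
  shows "1 \<le> snd (lparent Z)" "snd (lparent Z) < snd Z"
    "1 \<le> snd (rparent Z)" "snd (rparent Z) < snd Z"
    "0 \<le> snd (gparent Z)" "snd (gparent Z) < snd Z"
proof -
  have l: "1 \<le> snd (lparent Z) \<and> snd (lparent Z) < snd Z"
    using someI_ex[of "is_lparent Z"] assms unfolding lparent_def is_lparent_def by auto
  then show "1 \<le> snd (lparent Z)" "snd (lparent Z) < snd Z"
    "1 \<le> snd (rparent Z)" "snd (rparent Z) < snd Z" unfolding rparent_def vdiff_def by auto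
  then show "0 \<le> snd (gparent Z)" "snd (gparent Z) < snd Z"
    unfolding gparent_def using snd_canon_vdiff by auto
qed

lemma parents_vsum:
  assumes "det2 X Y = -1" "snd X \<ge> 1" "snd Y \<ge> 1" "vsum X Y \<in> Omega"
  shows "lparent (vsum X Y) = X" "rparent (vsum X Y) = Y"
    "gparent (vsum X Y) = canon (vdiff X Y)"
proof -
  have "is_lparent (vsum X Y) X"
    using assms unfolding is_lparent_def vsum_def det2_def by (simp add: algebra_simps)
  then show l: "lparent (vsum X Y) = X" by (rule lparent_eqI[OF assms(4)])
  then show r: "rparent (vsum X Y) = Y" unfolding rparent_def vsum_def vdiff_def by simp
  show "gparent (vsum X Y) = canon (vdiff X Y)" unfolding gparent_def l r ..
qed

lemma parents_Farey:
  assumes "Z \<in> Omega" "snd Z \<ge> 2"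
  shows "det2 (lparent Z) (rparent Z) = -1" "vsum (lparent Z) (rparent Z) = Z"
    "lparent Z \<in> Omega" "rparent Z \<in> Omega"
proof -
  have d: "det2 (lparent Z) Z = -1" using is_lparent_lparent[OF assms] unfolding is_lparent_def by simp
  show "det2 (lparent Z) (rparent Z) = -1" "vsum (lparent Z) (rparent Z) = Z"
    using d unfolding rparent_def det2_def vsum_def vdiff_def by (simp_all add: algebra_simps)
  have "coprime (fst (lparent Z)) (snd (lparent Z))"
    using d coprime_if_det[of "fst (lparent Z)" "snd Z" "snd (lparent Z)" "fst Z"] unfolding det2_def by simp
  then show "lparent Z \<in> Omega" using snd_parents_less[OF assms(2)] unfolding Omega_def by (cases "lparent Z") auto
  have "coprime (fst (rparent Z)) (snd (rparent Z))"
    using d coprime_if_det[of "fst (rparent Z)" "snd Z" "snd (rparent Z)" "fst Z"]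
    unfolding det2_def rparent_def vdiff_def by (simp add: algebra_simps)
  then show "rparent Z \<in> Omega" using snd_parents_less[OF assms(2)] unfolding Omega_def by (cases "rparent Z") auto
qed

lemma colour_edge_rel:
  assumes "valid_coloring col ecol" "edge_rel X Y Z W"
  shows "col W = col Z" "ecol {X, Y} = col Z" "col X \<noteq> col Y" "col Z \<noteq> col X" "col Z \<noteq> col Y"
  using assms unfolding valid_coloring_def by metis+

lemma colours_vertex:
  assumes "valid_coloring col ecol" "is_vertex {X, Y, Z}"
  shows "col X \<in> {1, 2, 3}" "col Y \<in> {1, 2, 3}" "col Z \<in> {1, 2, 3}"
    "col X \<noteq> col Y" "col Y \<noteq> col Z" "col X \<noteq> col Z"
proof -
  show "col X \<in> {1, 2, 3}" "col Y \<in> {1, 2, 3}" "col Z \<in> {1, 2, 3}"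
    using assms adj_in_Omega unfolding valid_coloring_def is_vertex_iff_adj by blast+
  obtain W where "edge_rel X Y Z W" using edge_rel_exists[OF assms(2)] ..
  then show "col X \<noteq> col Y" "col Y \<noteq> col Z" "col X \<noteq> col Z"
    using colour_edge_rel[OF assms(1)] by metis+
qed

lemma prod_colours_vertex:
  fixes f :: "nat \<Rightarrow> 'a :: comm_monoid_mult"
  assumes "valid_coloring col ecol" "is_vertex {X, Y, Z}"
  shows "f (col X) * f (col Y) * f (col Z) = f 1 * f 2 * f 3"
  using colours_vertex[OF assms] by (auto simp: mult_ac)

lemma colour_integers:
  assumes "valid_coloring col ecol"
  shows "col (n, 1) = (if even n then col (0, 1) else col (1, 1))"
proof -
  have step: "col (n + 2, 1) = col (n, 1)" for n
    using colour_edge_rel(1)[OF assms edge_rel_infinity[of n]] by simp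
  have "col (n, 1) = (if even n then col (0, 1) else col (1, 1)) \<and>
        col (n + 1, 1) = (if even (n + 1) then col (0, 1) else col (1, 1))"
  proof (induction n rule: int_induct[where k = 0])
    case (step1 n)
    then show ?case using step[of n] by (simp add: add.assoc)
  next
    case (step2 n)
    then show ?case using step[of "n - 1"] by (simp add: algebra_simps)
  qed simp
  then show ?thesis by simp
qed

lemma markoff_map_of_real_iff:
  fixes p q r s :: real and w :: "region \<Rightarrow> real"
  shows "markoff_map (of_real p, of_real q, of_real r, of_real s) col ecol (\<lambda>X. of_real (w X)) \<longleftrightarrow>
    (\<forall>X Y Z. is_vertex {X, Y, Z} \<and> col X = 1 \<and> col Y = 2 \<and> col Z = 3 \<longrightarrow>
       (w X)\<^sup>2 + (w Y)\<^sup>2 + (w Z)\<^sup>2 + w X * w Y * w Z = p * w X + q * w Y + r * w Z + s) \<and>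
    (\<forall>Y Z X X'. edge_rel Y Z X X' \<and> ecol {Y, Z} = 1 \<longrightarrow> w X + w X' = p - w Y * w Z) \<and>
    (\<forall>X Z Y Y'. edge_rel X Z Y Y' \<and> ecol {X, Z} = 2 \<longrightarrow> w Y + w Y' = q - w X * w Z) \<and>
    (\<forall>X Y Z Z'. edge_rel X Y Z Z' \<and> ecol {X, Y} = 3 \<longrightarrow> w Z + w Z' = r - w X * w Y)"
  unfolding markoff_map_def prod.case
  by (simp only: of_real_add[symmetric] of_real_mult[symmetric] of_real_power[symmetric]
      of_real_diff[symmetric] of_real_eq_iff)

section \<open>Values on the Farey tree\<close>

text \<open>The edge relation at the edge between the parents of \<open>Z\<close>, solved for the value at \<open>Z\<close>;
  the region \<open>\<infinity> = 1/0\<close> gets the value \<open>C\<close> and the integers \<open>n/1\<close> the values \<open>h n\<close>.\<close>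

function tree_val :: "(region \<Rightarrow> real) \<Rightarrow> real \<Rightarrow> (int \<Rightarrow> real) \<Rightarrow> region \<Rightarrow> real" where
  "tree_val \<kappa> C h Z = (if snd Z \<le> 0 then C else if snd Z = 1 then h (fst Z) else
     tree_val \<kappa> C h (lparent Z) * tree_val \<kappa> C h (rparent Z) - tree_val \<kappa> C h (gparent Z) + \<kappa> Z)"
  by auto
termination
  apply (relation "measure (\<lambda>(\<kappa>, C, h, Z). nat (snd Z))")
     apply simp
    apply (simp_all add: snd_parents_less)
  done

declare tree_val.simps[simp del]

lemma mult_minus_max_ge_add:
  fixes x y g k M :: real
  assumes "M \<ge> 0" "x \<ge> M + 4" "y \<ge> M + 4" "g \<le> max x y" "\<bar>k\<bar> \<le> M"
  shows "x * y - g + k \<ge> x + y"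
proof -
  have "(M + 2) * (M + 2) \<le> (x - 2) * (y - 2)" using assms by (intro mult_mono) auto
  then have "x * y \<ge> 2 * x + 2 * y + 4 * M + M * M" by (simp add: algebra_simps)
  then have "x * y \<ge> 2 * x + 2 * y + 4 * M" using zero_le_square[of M] by linarith
  then show ?thesis using assms by (auto simp: max_def abs_le_iff split: if_split_asm)
qed

text \<open>\<open>\<kappa>\<close> plays the role of the coefficients (later: the coefficient of the region's colour, up to
  sign), \<open>C\<close> is the value at \<open>\<infinity>\<close> and \<open>h\<close> gives the values at the integers.  The relations are
  those of a Markoff map with the sign of \<open>xyz\<close> reversed.\<close>

locale markoff_seed =
  fixes \<kappa> :: "region \<Rightarrow> real" and C :: real and h :: "int \<Rightarrow> real" and s M \<alpha> \<beta> :: real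
  assumes \<kappa>_edge_rel: "\<And>X Y Z W. edge_rel X Y Z W \<Longrightarrow> \<kappa> Z = \<kappa> W"
    and abs_\<kappa>_le: "\<And>X. \<bar>\<kappa> X\<bar> \<le> M"
    and C_gt_2: "2 < C" and C_le_3: "C \<le> 3"
    and h_rec: "\<And>n. h (n + 1) + h (n - 1) = C * h n + \<kappa> (n + 1, 1)"
    and h_energy: "(h 0)\<^sup>2 + (h 1)\<^sup>2 + C\<^sup>2 - h 0 * h 1 * C
      = \<kappa> (0, 1) * h 0 + \<kappa> (1, 1) * h 1 + \<kappa> (1, 0) * C + s"
    and h_ge: "\<And>n. h n \<ge> M + 4"
    and h_ge_linear: "\<And>n. h n \<ge> \<alpha> * \<bar>of_int n\<bar> + \<beta>"
    and \<alpha>_pos: "\<alpha> > 0" and \<beta>_pos: "\<beta> > 0"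
begin

abbreviation v :: "region \<Rightarrow> real" where
  "v \<equiv> tree_val \<kappa> C h"

lemma M_nonneg: "M \<ge> 0"
  using abs_\<kappa>_le[of undefined] by simp

lemma v_infinity: "snd Z \<le> 0 \<Longrightarrow> v Z = C"
  by (simp add: tree_val.simps)

lemma v_integer: "v (n, 1) = h n"
  by (simp add: tree_val.simps)

lemma v_parents: "snd Z \<ge> 2 \<Longrightarrow> v Z = v (lparent Z) * v (rparent Z) - v (gparent Z) + \<kappa> Z"
  by (subst tree_val.simps) simp

lemma v_vsum:
  assumes "det2 X Y = -1" "snd X \<ge> 1" "snd Y \<ge> 1" "vsum X Y \<in> Omega"
  shows "v (vsum X Y) = v X * v Y - v (canon (vdiff X Y)) + \<kappa> (vsum X Y)"
proof -
  have "snd (vsum X Y) \<ge> 2" using assms unfolding vsum_def by simp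
  then show ?thesis using v_parents parents_vsum[OF assms] by simp
qed

lemma v_neighbours_infinity:
  "v (canon (vsum (1, 0) (n, 1))) + v (canon (vdiff (1, 0) (n, 1)))
     = v (1, 0) * v (n, 1) + \<kappa> (canon (vsum (1, 0) (n, 1)))"
  using h_rec[of n] by (simp add: canon_def vsum_def vdiff_def v_integer v_infinity add.commute)

lemma v_neighbours:
  assumes "adj X Y"
  shows "v (canon (vsum X Y)) + v (canon (vdiff X Y)) = v X * v Y + \<kappa> (canon (vsum X Y))"
proof -
  have "X \<noteq> Y" using assms adj_irrefl by blast
  then have XY: "vsum Y X = vsum X Y" "canon (vdiff Y X) = canon (vdiff X Y)"
    using canon_vdiff_commute unfolding vsum_def by (auto simp: add.commute)
  consider "X = (1, 0)" | "Y = (1, 0)" | "snd X \<ge> 1" "snd Y \<ge> 1"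
    using adj_in_Omega[OF assms] Omega_snd_pos by blast
  then show ?thesis
  proof cases
    case 1
    then show ?thesis using assms v_neighbours_infinity adj_infinity_iff by auto
  next
    case 2
    then obtain n where "X = (n, 1)" using adj_sym[OF assms] adj_infinity_iff by auto
    then show ?thesis using 2 v_neighbours_infinity[of n] XY by (simp add: mult.commute)
  next
    case 3
    then have sum: "canon (vsum X Y) = vsum X Y" unfolding canon_def vsum_def by simp
    then have Omega: "vsum X Y \<in> Omega" "vsum Y X \<in> Omega"
      using neighbours_in_Omega[OF assms] XY by simp_all
    have "det2 X Y = -1 \<or> det2 Y X = -1"
      using assms unfolding adj_iff_det2 det2_def by (auto simp: algebra_simps abs_if split: if_splits)
    then show ?thesis
    proof
      assume "det2 X Y = -1"
      then show ?thesis using v_vsum 3 Omega sum by simp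
    next
      assume "det2 Y X = -1"
      then show ?thesis using v_vsum[of Y X] 3 Omega sum XY by (simp add: mult.commute)
    qed
  qed
qed

lemma v_edge_rel:
  assumes "edge_rel Y Z X X'"
  shows "v X + v X' = v Y * v Z + \<kappa> X"
proof -
  have a: "adj Y Z" using assms unfolding edge_rel_iff by blast
  have e: "edge_rel Y Z (canon (vsum Y Z)) (canon (vdiff Y Z))"
    using a neighbours_distinct[OF a] unfolding edge_rel_iff by blast
  have "(X = canon (vsum Y Z) \<and> X' = canon (vdiff Y Z)) \<or> (X = canon (vdiff Y Z) \<and> X' = canon (vsum Y Z))"
    using assms unfolding edge_rel_iff by blast
  then show ?thesis using v_neighbours[OF a] \<kappa>_edge_rel[OF e] by auto
qed

definition energy :: "region \<Rightarrow> region \<Rightarrow> region \<Rightarrow> real" where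
  "energy X Y Z = (v X)\<^sup>2 + (v Y)\<^sup>2 + (v Z)\<^sup>2 - v X * v Y * v Z - \<kappa> X * v X - \<kappa> Y * v Y - \<kappa> Z * v Z"

lemma energy_commute: "energy X Y Z = energy Y X Z" "energy X Y Z = energy X Z Y"
  unfolding energy_def by (simp_all add: algebra_simps)

text \<open>As a function of the value \<open>t\<close> at \<open>Z\<close>, the energy is \<open>t\<^sup>2 - (v X * v Y + \<kappa> Z) t + const\<close>, and
  the edge relation says that the values at the two ends of the edge \<open>X \<inter> Y\<close> sum to the linear
  coefficient.\<close>

lemma energy_edge_rel:
  assumes "edge_rel X Y Z W"
  shows "energy X Y Z = energy X Y W"
proof -
  have \<kappa>: "\<kappa> W = \<kappa> Z" using \<kappa>_edge_rel[OF assms] by simp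
  have "energy X Y Z - energy X Y W = (v Z - v W) * (v Z + v W - v X * v Y - \<kappa> Z)"
    unfolding energy_def \<kappa> by (simp add: algebra_simps power2_eq_square)
  also have "\<dots> = 0" using v_edge_rel[OF assms] by simp
  finally show ?thesis by simp
qed

lemma energy_integers: "energy (1, 0) (n, 1) (n + 1, 1) = s"
proof (induction n rule: int_induct[where k = 0])
  case base
  then show ?case using h_energy unfolding energy_def by (simp add: v_integer v_infinity algebra_simps)
next
  case (step1 n)
  then show ?case
    using energy_edge_rel[OF edge_rel_infinity[of n]] energy_commute by (simp add: add.assoc)
next
  case (step2 n)
  then show ?case
    using energy_edge_rel[OF edge_rel_infinity[of "n - 1"]] energy_commute by (simp add: algebra_simps)
qed

lemma energy_vertex_infinity:
  assumes "adj (1, 0) Y" "adj (1, 0) Z" "adj Y Z"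
  shows "energy (1, 0) Y Z = s"
proof -
  obtain n m where Y: "Y = (n, 1)" and Z: "Z = (m, 1)" using assms adj_infinity_iff by blast
  then have "m = n + 1 \<or> n = m + 1" using assms(3) unfolding adj_def by auto
  then show ?thesis using energy_integers Y Z energy_commute by metis
qed

text \<open>Descent towards \<open>\<infinity>\<close>: crossing the edge between the two regions with the smaller
  denominators decreases the sum of the denominators at the vertex.\<close>

lemma energy_vertex: "adj X Y \<Longrightarrow> adj Y Z \<Longrightarrow> adj X Z \<Longrightarrow> energy X Y Z = s"
proof (induction "nat (snd X + snd Y + snd Z)" arbitrary: X Y Z rule: less_induct)
  case less
  have flip: "energy A B V = s"
    if "adj A B" "adj A V" "adj B V" "snd A \<ge> 1" "snd B \<ge> 1" "snd A \<le> snd V" "snd B \<le> snd V"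
      "snd A + snd B + snd V = snd X + snd Y + snd Z" for A B V
  proof -
    let ?W = "canon (vdiff A B)"
    have W: "snd ?W = \<bar>snd A - snd B\<bar>" using that snd_canon_vdiff by simp
    then have "V \<noteq> ?W" using that by auto
    then have e: "edge_rel A B V ?W"
      using that common_neighbour[of A B V] neighbours_distinct unfolding edge_rel_iff by auto
    have "energy A B ?W = s"
      using less.hyps[of A B ?W] that W neighbours_adj[OF that(1)] by auto
    then show ?thesis using energy_edge_rel[OF e] by simp
  qed
  have O: "X \<in> Omega" "Y \<in> Omega" "Z \<in> Omega" using less.prems adj_in_Omega by auto
  consider "X = (1, 0)" | "Y = (1, 0)" | "Z = (1, 0)" | "snd X \<ge> 1" "snd Y \<ge> 1" "snd Z \<ge> 1"
    using O Omega_snd_pos by blast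
  then show ?case
  proof cases
    case 4
    consider "snd X \<le> snd Z" "snd Y \<le> snd Z" | "snd Y \<le> snd X" "snd Z \<le> snd X"
      | "snd X \<le> snd Y" "snd Z \<le> snd Y" by linarith
    then show ?thesis
    proof cases
      case 1
      then show ?thesis using flip[of X Y Z] less.prems 4 by auto
    next
      case 2
      then show ?thesis using flip[of Y Z X] less.prems 4 adj_sym energy_commute by (auto simp: add_ac)
    next
      case 3
      then show ?thesis using flip[of X Z Y] less.prems 4 adj_sym energy_commute by (auto simp: add_ac)
    qed
  qed (use energy_vertex_infinity less.prems adj_sym energy_commute in metis)+
qed

text \<open>The grandparent is a parent of the parent with the larger denominator, so superadditivity
  at that parent bounds it.\<close>

lemma v_gparent_le_max:
  assumes Z: "Z \<in> Omega" "snd Z \<ge> 2"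
    and ge3: "v (lparent Z) \<ge> 3" "v (rparent Z) \<ge> 3"
    and superadd_l: "snd (lparent Z) \<ge> 2 \<Longrightarrow>
      v (lparent Z) \<ge> v (lparent (lparent Z)) + v (rparent (lparent Z))"
    and superadd_r: "snd (rparent Z) \<ge> 2 \<Longrightarrow>
      v (rparent Z) \<ge> v (lparent (rparent Z)) + v (rparent (rparent Z))"
  shows "v (gparent Z) \<le> max (v (lparent Z)) (v (rparent Z))"
proof -
  define X Y where "X = lparent Z" and "Y = rparent Z"
  have d: "det2 X Y = -1" and O: "X \<in> Omega" "Y \<in> Omega"
    using parents_Farey[OF Z] unfolding X_def Y_def by auto
  have s: "snd X \<ge> 1" "snd Y \<ge> 1" using snd_parents_less[OF Z(2)] unfolding X_def Y_def by auto
  consider "snd X > snd Y" | "snd Y > snd X" | "snd X = snd Y" by linarith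
  then show ?thesis
  proof cases
    case 1
    define W where "W = vdiff X Y"
    have "vsum W Y = X" "det2 W Y = -1" "snd W \<ge> 1"
      using d 1 unfolding W_def vsum_def vdiff_def det2_def by (auto simp: algebra_simps)
    then have "lparent X = W" "rparent X = Y" using parents_vsum[of W Y] s O by auto
    then have "v W \<le> v X" using superadd_l ge3 1 s unfolding X_def Y_def by fastforce
    moreover have "gparent Z = W" using 1 unfolding gparent_def W_def X_def Y_def canon_def vdiff_def by simp
    ultimately show ?thesis unfolding X_def by simp
  next
    case 2
    define W where "W = vdiff Y X"
    have "vsum X W = Y" "det2 X W = -1" "snd W \<ge> 1"
      using d 2 unfolding W_def vsum_def vdiff_def det2_def by (auto simp: algebra_simps)
    then have "lparent Y = X" "rparent Y = W" using parents_vsum[of X W] s O by auto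
    then have "v W \<le> v Y" using superadd_r ge3 2 s unfolding X_def Y_def by fastforce
    moreover have "gparent Z = W" using 2 unfolding gparent_def W_def X_def Y_def canon_def vdiff_def by simp
    ultimately show ?thesis unfolding Y_def by simp
  next
    case 3
    then have "v (gparent Z) = C" using v_infinity snd_canon_vdiff s
      unfolding gparent_def X_def Y_def by simp
    then show ?thesis using C_le_3 ge3 by simp
  qed
qed

lemma v_growth:
  assumes "Z \<in> Omega" "snd Z \<ge> 1"
  shows "v Z \<ge> M + 4 \<and> v Z \<ge> \<alpha> * \<bar>of_int (fst Z)\<bar> + \<beta> * of_int (snd Z) \<and>
    (snd Z \<ge> 2 \<longrightarrow> v Z \<ge> v (lparent Z) + v (rparent Z))"
  using assms
proof (induction "nat (snd Z)" arbitrary: Z rule: less_induct)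
  case less
  show ?case
  proof (cases "snd Z = 1")
    case True
    then obtain n where "Z = (n, 1)" by (cases Z) auto
    then show ?thesis using h_ge[of n] h_ge_linear[of n] v_integer by simp
  next
    case False
    then have Z: "Z \<in> Omega" "snd Z \<ge> 2" using less.prems by auto
    define X Y where "X = lparent Z" and "Y = rparent Z"
    have O: "X \<in> Omega" "Y \<in> Omega" and sum: "vsum X Y = Z"
      using parents_Farey[OF Z] unfolding X_def Y_def by auto
    have s: "1 \<le> snd X" "snd X < snd Z" "1 \<le> snd Y" "snd Y < snd Z"
      using snd_parents_less[OF Z(2)] unfolding X_def Y_def by auto
    have IHX: "v X \<ge> M + 4" "v X \<ge> \<alpha> * \<bar>of_int (fst X)\<bar> + \<beta> * of_int (snd X)"
      "snd X \<ge> 2 \<Longrightarrow> v X \<ge> v (lparent X) + v (rparent X)"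
      using less.hyps[of X] O s by auto
    have IHY: "v Y \<ge> M + 4" "v Y \<ge> \<alpha> * \<bar>of_int (fst Y)\<bar> + \<beta> * of_int (snd Y)"
      "snd Y \<ge> 2 \<Longrightarrow> v Y \<ge> v (lparent Y) + v (rparent Y)"
      using less.hyps[of Y] O s by auto
    have "v (gparent Z) \<le> max (v X) (v Y)"
      using v_gparent_le_max[OF Z] IHX IHY M_nonneg unfolding X_def Y_def by force
    then have super: "v Z \<ge> v X + v Y"
      using v_parents[OF Z(2)] mult_minus_max_ge_add[OF M_nonneg IHX(1) IHY(1) _ abs_\<kappa>_le[of Z]]
      unfolding X_def Y_def by simp
    have "\<bar>of_int (fst Z)\<bar> \<le> \<bar>of_int (fst X)\<bar> + \<bar>real_of_int (fst Y)\<bar>"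
      using sum unfolding vsum_def by auto
    then have "\<alpha> * \<bar>of_int (fst Z)\<bar> \<le> \<alpha> * \<bar>of_int (fst X)\<bar> + \<alpha> * \<bar>real_of_int (fst Y)\<bar>"
      using \<alpha>_pos by (simp add: distrib_left[symmetric])
    moreover have "snd Z = snd X + snd Y" using sum unfolding vsum_def by auto
    ultimately show ?thesis using super IHX IHY M_nonneg Z(2) unfolding X_def Y_def
      by (simp add: distrib_left)
  qed
qed

lemma v_gt_2: "Z \<in> Omega \<Longrightarrow> v Z > 2"
  using v_growth[of Z] M_nonneg v_infinity[of Z] C_gt_2 Omega_snd_nonneg[of Z] by fastforce

lemma finite_sublevel: "finite {Z \<in> Omega. v Z \<le> L}"
proof (rule finite_subset)
  define N where "N = int (nat \<lceil>L / \<alpha>\<rceil> + nat \<lceil>L / \<beta>\<rceil>)"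
  show "{Z \<in> Omega. v Z \<le> L} \<subseteq> insert (1, 0) ({- N..N} \<times> {0..N})"
  proof
    fix Z assume Z: "Z \<in> {Z \<in> Omega. v Z \<le> L}"
    show "Z \<in> insert (1, 0) ({- N..N} \<times> {0..N})"
    proof (cases "Z = (1, 0)")
      case False
      obtain p q where pq: "Z = (p, q)" by (cases Z)
      have q: "q \<ge> 1" using Z False Omega_snd_pos pq by fastforce
      then have "\<alpha> * \<bar>of_int p\<bar> + \<beta> * of_int q \<le> L" using v_growth[of Z] Z pq by auto
      moreover have "\<alpha> * \<bar>of_int p\<bar> \<ge> 0" "\<beta> * of_int q \<ge> 0" using q \<alpha>_pos \<beta>_pos by auto
      ultimately have "\<alpha> * \<bar>of_int p\<bar> \<le> L" "\<beta> * of_int q \<le> L" by linarith+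
      then have "\<bar>of_int p\<bar> \<le> L / \<alpha>" "of_int q \<le> L / \<beta>"
        using \<alpha>_pos \<beta>_pos by (simp_all add: field_simps)
      then have "\<bar>p\<bar> \<le> N" "q \<le> N" unfolding N_def by linarith+
      then show ?thesis using q pq by auto
    qed simp
  qed
qed simp

text \<open>Twisting by a sign per colour whose product is \<open>-1\<close> restores the sign of \<open>xyz\<close>.\<close>

lemma twisted_markoff_map:
  fixes \<sigma> k :: "nat \<Rightarrow> real"
  assumes coloring: "valid_coloring col ecol"
    and \<kappa>_eq: "\<And>X. \<kappa> X = \<sigma> (col X) * k (col X)"
    and \<sigma>_abs: "\<And>c. \<bar>\<sigma> c\<bar> = 1" and \<sigma>_prod: "\<sigma> 1 * \<sigma> 2 * \<sigma> 3 = -1"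
  shows "markoff_map (of_real (k 1), of_real (k 2), of_real (k 3), of_real s) col ecol
    (\<lambda>X. of_real (\<sigma> (col X) * v X))"
proof -
  have \<sigma>_sq: "\<sigma> c * \<sigma> c = 1" for c using \<sigma>_abs[of c] abs_mult_self_eq[of "\<sigma> c"] by simp
  define w where "w X = \<sigma> (col X) * v X" for X
  have prod: "\<sigma> (col X) * \<sigma> (col Y) * \<sigma> (col Z) = -1" if "is_vertex {X, Y, Z}" for X Y Z
    using prod_colours_vertex[where f = \<sigma>, OF coloring that] \<sigma>_prod by simp
  have vertex: "(w X)\<^sup>2 + (w Y)\<^sup>2 + (w Z)\<^sup>2 + w X * w Y * w Z
      = k (col X) * w X + k (col Y) * w Y + k (col Z) * w Z + s"
    if "is_vertex {X, Y, Z}" for X Y Z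
  proof -
    have sq: "(w U)\<^sup>2 = (v U)\<^sup>2" and lin: "k (col U) * w U = \<kappa> U * v U" for U
      using \<sigma>_sq[of "col U"] \<kappa>_eq[of U] unfolding w_def power2_eq_square by (simp_all add: algebra_simps)
    have "w X * w Y * w Z = (\<sigma> (col X) * \<sigma> (col Y) * \<sigma> (col Z)) * (v X * v Y * v Z)"
      unfolding w_def by (simp add: mult_ac)
    then have "w X * w Y * w Z = - (v X * v Y * v Z)" using prod[OF that] by simp
    moreover have "energy X Y Z = s" using energy_vertex that unfolding is_vertex_iff_adj by blast
    ultimately show ?thesis unfolding energy_def sq lin by linarith
  qed
  have edge: "w X + w X' = k (col X) - w Y * w Z" if e: "edge_rel Y Z X X'" for X X' Y Z
  proof -
    have "is_vertex {Y, Z, X}" using e unfolding edge_rel_def by blast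
    then have "\<sigma> (col Y) * \<sigma> (col Z) = - \<sigma> (col X)"
      using prod[of Y Z X] \<sigma>_sq[of "col X"] by (metis mult.assoc mult_minus_left mult_1_right)
    then have "w Y * w Z = - \<sigma> (col X) * (v Y * v Z)" unfolding w_def by (metis mult.assoc mult.left_commute)
    moreover have "w X + w X' = \<sigma> (col X) * (v X + v X')"
      using colour_edge_rel(1)[OF coloring e] unfolding w_def by (simp add: algebra_simps)
    then have "w X + w X' = \<sigma> (col X) * (v Y * v Z + \<kappa> X)" using v_edge_rel[OF e] by simp
    ultimately show ?thesis using \<sigma>_sq[of "col X"] \<kappa>_eq[of X] by (simp add: algebra_simps)
  qed
  have "\<And>Y Z X X'. edge_rel Y Z X X' \<Longrightarrow> col X = ecol {Y, Z}"
    using colour_edge_rel(2)[OF coloring] by metis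
  then show ?thesis unfolding markoff_map_of_real_iff w_def[symmetric]
    using vertex edge by auto
qed

lemma twisted_BQ:
  fixes \<sigma> :: "nat \<Rightarrow> real"
  assumes "\<And>c. \<bar>\<sigma> c\<bar> = 1"
  shows "BQ (\<lambda>X. of_real (\<sigma> (col X) * v X)) L"
proof -
  have norm: "norm (of_real (\<sigma> (col X) * v X) :: complex) = v X" if "X \<in> Omega" for X
    using assms v_gt_2[OF that] by (subst norm_of_real) (simp add: abs_mult)
  have "of_real (\<sigma> (col X) * v X) \<notin> complex_of_real ` {-2..2}" if "X \<in> Omega" for X
  proof -
    have "\<bar>\<sigma> (col X) * v X\<bar> > 2" using v_gt_2[OF that] assms by (simp add: abs_mult)
    then have "\<sigma> (col X) * v X \<notin> {-2..2}" by auto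
    then show ?thesis by (simp only: image_iff of_real_eq_iff) blast
  qed
  moreover have "{X \<in> Omega. norm (of_real (\<sigma> (col X) * v X) :: complex) \<le> L} = {X \<in> Omega. v X \<le> L}"
    using norm by auto
  ultimately show ?thesis unfolding BQ_def using finite_sublevel by simp
qed

end

section \<open>Values on the integers\<close>

lemma cosh_ge_linear: "cosh (y :: real) \<ge> (1 + \<bar>y\<bar>) / 2"
proof -
  have "1 + \<bar>y\<bar> \<le> exp \<bar>y\<bar>" by (rule exp_ge_add_one_self)
  also have "\<dots> \<le> exp y + exp (- y)" by (cases "y \<ge> 0") auto
  finally show ?thesis by (simp add: cosh_def)
qed

text \<open>With \<open>C = 2 cosh \<theta>\<close>, \<open>A cosh (n \<theta>)\<close> solves the homogeneous recurrence
  \<open>h (n + 1) + h (n - 1) = C h n\<close>, and the 2-periodic sequence \<open>e\<^sub>0, e\<^sub>1, e\<^sub>0, \<dots>\<close> is a particular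
  solution of the inhomogeneous one.\<close>

lemma cosh_integer_values:
  fixes A C e0 e1 a0 a1 :: real
  assumes C: "C > 2" and A: "A > 0"
    and a0: "a0 = C * e1 - 2 * e0" and a1: "a1 = C * e0 - 2 * e1"
  defines "\<theta> \<equiv> arcosh (C / 2)"
  defines "h \<equiv> \<lambda>n :: int. A * cosh (of_int n * \<theta>) + (if even n then e0 else e1)"
  shows "h (n + 1) + h (n - 1) = C * h n - (if even (n + 1) then a0 else a1)"
    and "4 * ((h 0)\<^sup>2 + (h 1)\<^sup>2 + C\<^sup>2 - h 0 * h 1 * C + a0 * h 0 + a1 * h 1)
      = A\<^sup>2 * (4 - C\<^sup>2) + 2 * (a0 * e0 + a1 * e1) + 4 * C\<^sup>2"
    and "h n \<ge> A * \<theta> / 2 * \<bar>of_int n\<bar> + A / 2 + (if even n then e0 else e1)"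
    and "\<theta> > 0"
proof -
  have cosh_\<theta>: "cosh \<theta> = C / 2" unfolding \<theta>_def using C by simp
  show "\<theta> > 0" unfolding \<theta>_def using C by simp
  have "cosh ((of_int n + 1) * \<theta>) + cosh ((of_int n - 1) * \<theta>) = C * cosh (of_int n * \<theta>)"
    using cosh_add[of "of_int n * \<theta>" \<theta>] cosh_diff[of "of_int n * \<theta>" \<theta>] cosh_\<theta>
    by (simp add: algebra_simps)
  then have "A * cosh ((of_int n + 1) * \<theta>) + A * cosh ((of_int n - 1) * \<theta>) = C * (A * cosh (of_int n * \<theta>))"
    by (metis distrib_left mult.left_commute)
  then show "h (n + 1) + h (n - 1) = C * h n - (if even (n + 1) then a0 else a1)"
    unfolding h_def using a0 a1 by (auto simp: algebra_simps)
  have "h 0 = A + e0" "h 1 = A * C / 2 + e1" unfolding h_def using cosh_\<theta> by simp_all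
  then show "4 * ((h 0)\<^sup>2 + (h 1)\<^sup>2 + C\<^sup>2 - h 0 * h 1 * C + a0 * h 0 + a1 * h 1)
      = A\<^sup>2 * (4 - C\<^sup>2) + 2 * (a0 * e0 + a1 * e1) + 4 * C\<^sup>2"
    unfolding a0 a1 by (simp add: algebra_simps power2_eq_square)
  have "A * cosh (of_int n * \<theta>) \<ge> A * ((1 + \<bar>of_int n\<bar> * \<theta>) / 2)"
    using cosh_ge_linear[of "of_int n * \<theta>"] \<open>\<theta> > 0\<close> A by (intro mult_left_mono) (auto simp: abs_mult)
  then show "h n \<ge> A * \<theta> / 2 * \<bar>of_int n\<bar> + A / 2 + (if even n then e0 else e1)"
    unfolding h_def by (simp add: algebra_simps)
qed

text \<open>The periodic part blows up like \<open>1 / (C\<^sup>2 - 4)\<close> as \<open>C \<rightarrow> 2\<close>.\<close>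

lemma periodic_solution_exists:
  fixes a0 a1 B :: real
  assumes a: "a0 \<ge> 0" "a1 \<ge> 0" "a0 + a1 > 0"
  obtains C e0 e1 where "2 < C" "C \<le> 3" "a0 = C * e1 - 2 * e0" "a1 = C * e0 - 2 * e1"
    "e0 \<ge> B" "e1 \<ge> B" "a0 * e0 + a1 * e1 \<ge> B"
proof -
  define S where "S = a0 + a1"
  define D where "D = min 1 (min (2 * S / (\<bar>B\<bar> + 1)) (2 * S\<^sup>2 / (\<bar>B\<bar> + 1)))"
  have S: "S > 0" unfolding S_def using a by simp
  then have D: "0 < D" "D \<le> 1" unfolding D_def by auto
  have "D \<le> 2 * S / (\<bar>B\<bar> + 1)" "D \<le> 2 * S\<^sup>2 / (\<bar>B\<bar> + 1)" unfolding D_def by auto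
  then have "2 * S / D \<ge> \<bar>B\<bar> + 1" "2 * S\<^sup>2 / D \<ge> \<bar>B\<bar> + 1" using D by (simp_all add: field_simps)
  then have SD: "2 * S / D \<ge> B" "2 * S\<^sup>2 / D \<ge> B" by linarith+
  define C where "C = sqrt (4 + D)"
  have CC: "C\<^sup>2 = 4 + D" unfolding C_def using D by simp
  have C: "2 < C" "C \<le> 3"
    unfolding C_def using D real_sqrt_less_mono[of 4 "4 + D"] real_sqrt_le_mono[of "4 + D" 9] by auto
  define e0 e1 where "e0 = (2 * a0 + C * a1) / D" and "e1 = (2 * a1 + C * a0) / D"
  have "C * e1 - 2 * e0 = (C\<^sup>2 - 4) * a0 / D" "C * e0 - 2 * e1 = (C\<^sup>2 - 4) * a1 / D"
    unfolding e0_def e1_def using D by (simp_all add: field_simps power2_eq_square)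
  then have "a0 = C * e1 - 2 * e0" "a1 = C * e0 - 2 * e1" using CC D by simp_all
  moreover have "2 * S \<le> 2 * a0 + C * a1" "2 * S \<le> 2 * a1 + C * a0"
    unfolding S_def using C a mult_right_mono[of 2 C] by fastforce+
  then have "e0 \<ge> 2 * S / D" "e1 \<ge> 2 * S / D"
    unfolding e0_def e1_def using D by (auto intro: divide_right_mono)
  moreover have "a0 * e0 + a1 * e1 = 2 * S\<^sup>2 / D + (C - 2) * (2 * a0 * a1) / D"
    unfolding e0_def e1_def S_def using D by (simp add: field_simps power2_eq_square)
  moreover have "(C - 2) * (2 * a0 * a1) / D \<ge> 0" using C a D by simp
  ultimately show ?thesis using C SD by (intro that[of C e1 e0]) linarith+
qed

text \<open>The vertex relation at \<open>{\<infinity>, 0, 1}\<close> determines \<open>A\<close>; it is solvable since the periodic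
  part can be taken as large as we like.\<close>

lemma integer_values_exist:
  fixes a0 a1 k s M :: real
  assumes a: "a0 \<ge> 0" "a1 \<ge> 0" "a0 + a1 > 0" and M: "M \<ge> 0" "\<bar>k\<bar> \<le> M"
  obtains C \<alpha> \<beta> and h :: "int \<Rightarrow> real" where "2 < C" "C \<le> 3"
    "\<And>n. h (n + 1) + h (n - 1) = C * h n - (if even (n + 1) then a0 else a1)"
    "(h 0)\<^sup>2 + (h 1)\<^sup>2 + C\<^sup>2 - h 0 * h 1 * C = - a0 * h 0 - a1 * h 1 + k * C + s"
    "\<And>n. h n \<ge> M + 4" "\<And>n. h n \<ge> \<alpha> * \<bar>of_int n\<bar> + \<beta>" "\<alpha> > 0" "\<beta> > 0"
proof -
  obtain C e0 e1 where C: "2 < C" "C \<le> 3" and a0: "a0 = C * e1 - 2 * e0" and a1: "a1 = C * e0 - 2 * e1"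
    and e: "e0 \<ge> 7 * M + 2 * \<bar>s\<bar> + 4" "e1 \<ge> 7 * M + 2 * \<bar>s\<bar> + 4"
    and ae: "a0 * e0 + a1 * e1 \<ge> 7 * M + 2 * \<bar>s\<bar> + 4"
    using periodic_solution_exists[OF a] by blast
  have "k * C \<le> \<bar>k\<bar> * C" using C by (intro mult_right_mono) auto
  also have "\<dots> \<le> M * 3" using M C by (intro mult_mono) auto
  finally have "k * C \<le> 3 * M" by simp
  then have Q: "2 * (a0 * e0 + a1 * e1) + 4 * (C\<^sup>2 - k * C - s) > 0"
    using ae C M(1) power_strict_mono[of 2 C 2] by (simp add: abs_le_iff)
  define A where "A = sqrt ((2 * (a0 * e0 + a1 * e1) + 4 * (C\<^sup>2 - k * C - s)) / (C\<^sup>2 - 4))"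
  have "C\<^sup>2 > 4" using C power_strict_mono[of 2 C 2] by simp
  then have A: "A > 0" "A\<^sup>2 * (C\<^sup>2 - 4) = 2 * (a0 * e0 + a1 * e1) + 4 * (C\<^sup>2 - k * C - s)"
    unfolding A_def using Q by simp_all
  define \<theta> where "\<theta> = arcosh (C / 2)"
  define h where "h n = A * cosh (of_int n * \<theta>) + (if even n then e0 else e1)" for n :: int
  note h = cosh_integer_values[OF C(1) A(1) a0 a1, folded \<theta>_def, folded h_def]
  show ?thesis
  proof
    show "h (n + 1) + h (n - 1) = C * h n - (if even (n + 1) then a0 else a1)" for n
      by (rule h(1))
    show "(h 0)\<^sup>2 + (h 1)\<^sup>2 + C\<^sup>2 - h 0 * h 1 * C = - a0 * h 0 - a1 * h 1 + k * C + s"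
      using h(2) A(2) by (simp add: algebra_simps)
    show "h n \<ge> A * \<theta> / 2 * \<bar>of_int n\<bar> + A / 2" "h n \<ge> M + 4" for n
    proof -
      have "A * \<theta> / 2 * \<bar>of_int n\<bar> \<ge> 0" using A h(4) by simp
      then show "h n \<ge> A * \<theta> / 2 * \<bar>of_int n\<bar> + A / 2" "h n \<ge> M + 4"
        using h(3)[of n] e M A by (auto split: if_splits)
    qed
    show "A * \<theta> / 2 > 0" "A / 2 > 0" using A h(4) by auto
  qed (use C in auto)
qed

definition colour_coeff :: "real \<Rightarrow> real \<Rightarrow> real \<Rightarrow> nat \<Rightarrow> real" where
  "colour_coeff p q r c = (if c = 1 then p else if c = 2 then q else if c = 3 then r else 0)"

lemma base_vertex: "is_vertex {(0, 1), (1, 1), (1, 0)}"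
  unfolding is_vertex_iff_adj adj_def Omega_def by auto

text \<open>The sign \<open>-1\<close> of \<open>\<sigma> \<cdot> k\<close> on the integers makes the periodic part of the integer values
  positive.\<close>

lemma colour_signs_exist:
  fixes k :: "nat \<Rightarrow> real"
  assumes coloring: "valid_coloring col ecol"
  obtains \<sigma> :: "nat \<Rightarrow> real" where "\<And>c. \<bar>\<sigma> c\<bar> = 1" "\<sigma> 1 * \<sigma> 2 * \<sigma> 3 = -1"
    "\<And>n. \<sigma> (col (n, 1)) * k (col (n, 1)) = - \<bar>k (col (n, 1))\<bar>"
proof
  define c0 c1 where "c0 = col (0, 1)" and "c1 = col (1, 1)"
  have c: "c0 \<noteq> c1" "c1 \<noteq> col (1, 0)" "c0 \<noteq> col (1, 0)"
    using colours_vertex[OF coloring base_vertex] unfolding c0_def c1_def by auto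
  define s0 s1 :: real where "s0 = (if k c0 \<ge> 0 then -1 else 1)" and "s1 = (if k c1 \<ge> 0 then -1 else 1)"
  define \<sigma> where "\<sigma> c = (if c = c0 then s0 else if c = c1 then s1 else - s0 * s1)" for c
  show "\<bar>\<sigma> c\<bar> = 1" for c unfolding \<sigma>_def s0_def s1_def by auto
  have "\<sigma> c0 * \<sigma> c1 * \<sigma> (col (1, 0)) = -1"
    unfolding \<sigma>_def s0_def s1_def using c by auto
  then show "\<sigma> 1 * \<sigma> 2 * \<sigma> 3 = -1"
    using prod_colours_vertex[where f = \<sigma>, OF coloring base_vertex] unfolding c0_def c1_def by simp
  show "\<sigma> (col (n, 1)) * k (col (n, 1)) = - \<bar>k (col (n, 1))\<bar>" for n
    using colour_integers[OF coloring, of n] c(1)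
    unfolding \<sigma>_def s0_def s1_def c0_def[symmetric] c1_def[symmetric] by auto
qed

lemma real_BQ_markoff_map_exists_integers:
  fixes p q r s L :: real
  assumes coloring: "valid_coloring col ecol"
    and nonzero: "colour_coeff p q r (col (0, 1)) \<noteq> 0 \<or> colour_coeff p q r (col (1, 1)) \<noteq> 0"
  shows "\<exists>\<phi>. markoff_map (of_real p, of_real q, of_real r, of_real s) col ecol \<phi> \<and>
    (\<forall>X\<in>Omega. \<phi> X \<in> \<real>) \<and> BQ \<phi> L"
proof -
  define k where "k = colour_coeff p q r"
  obtain \<sigma> where \<sigma>_abs: "\<And>c. \<bar>\<sigma> c\<bar> = 1" and \<sigma>_prod: "\<sigma> 1 * \<sigma> 2 * \<sigma> 3 = -1"
    and \<sigma>_integers: "\<And>n. \<sigma> (col (n, 1)) * k (col (n, 1)) = - \<bar>k (col (n, 1))\<bar>"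
    using colour_signs_exist[OF coloring] by metis
  define \<kappa> where "\<kappa> X = \<sigma> (col X) * k (col X)" for X
  define a0 a1 where "a0 = \<bar>k (col (0, 1))\<bar>" and "a1 = \<bar>k (col (1, 1))\<bar>"
  have \<kappa>_integers: "\<kappa> (n, 1) = - (if even n then a0 else a1)" for n
    using \<sigma>_integers[of n] colour_integers[OF coloring, of n] unfolding \<kappa>_def a0_def a1_def by simp
  define M where "M = \<bar>p\<bar> + \<bar>q\<bar> + \<bar>r\<bar>"
  have \<kappa>_le: "\<bar>\<kappa> X\<bar> \<le> M" for X
    using \<sigma>_abs unfolding \<kappa>_def k_def colour_coeff_def M_def by (auto simp: abs_mult)
  have "a0 \<ge> 0" "a1 \<ge> 0" "a0 + a1 > 0" "M \<ge> 0"
    using nonzero unfolding a0_def a1_def k_def M_def by auto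
  then obtain C \<alpha> \<beta> h where "2 < C" "C \<le> 3"
    and rec: "\<And>n. h (n + 1) + h (n - 1) = C * h n - (if even (n + 1) then a0 else a1)"
    and energy: "(h 0)\<^sup>2 + (h 1)\<^sup>2 + C\<^sup>2 - h 0 * h 1 * C = - a0 * h 0 - a1 * h 1 + \<kappa> (1, 0) * C + s"
    and "\<And>n. h n \<ge> M + 4" "\<And>n. h n \<ge> \<alpha> * \<bar>of_int n\<bar> + \<beta>" "\<alpha> > 0" "\<beta> > 0"
    using integer_values_exist \<kappa>_le by metis
  have seed: "markoff_seed \<kappa> C h s M \<alpha> \<beta>"
  proof
    show "\<kappa> Z = \<kappa> W" if "edge_rel X Y Z W" for X Y Z W
      using colour_edge_rel(1)[OF coloring that] unfolding \<kappa>_def by simp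
    show "h (n + 1) + h (n - 1) = C * h n + \<kappa> (n + 1, 1)" for n
      using rec[of n] \<kappa>_integers[of "n + 1"] by simp
    show "(h 0)\<^sup>2 + (h 1)\<^sup>2 + C\<^sup>2 - h 0 * h 1 * C = \<kappa> (0, 1) * h 0 + \<kappa> (1, 1) * h 1 + \<kappa> (1, 0) * C + s"
      using energy \<kappa>_integers[of 0] \<kappa>_integers[of 1] by simp
  qed fact+
  then interpret markoff_seed \<kappa> C h s M \<alpha> \<beta> .
  define \<phi> where "\<phi> X = complex_of_real (\<sigma> (col X) * v X)" for X
  have "k 1 = p" "k 2 = q" "k 3 = r" unfolding k_def colour_coeff_def by simp_all
  then have "markoff_map (of_real p, of_real q, of_real r, of_real s) col ecol \<phi>"
    using twisted_markoff_map[OF coloring \<kappa>_def \<sigma>_abs \<sigma>_prod] unfolding \<phi>_def by simp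
  moreover have "BQ \<phi> L" unfolding \<phi>_def by (rule twisted_BQ) (rule \<sigma>_abs)
  ultimately show ?thesis unfolding \<phi>_def by auto
qed

section \<open>The reflection \<open>x \<mapsto> 1/x\<close> of the Farey tree\<close>

definition recip :: "region \<Rightarrow> region" where
  "recip X = (if fst X < 0 then (- snd X, - fst X) else (snd X, fst X))"

lemma recip_Omega: "X \<in> Omega \<Longrightarrow> recip X \<in> Omega"
  and recip_recip: "X \<in> Omega \<Longrightarrow> recip (recip X) = X"
  unfolding recip_def Omega_def by (auto simp: coprime_commute)

lemma adj_recip: "adj X Y \<Longrightarrow> adj (recip X) (recip Y)"
  using recip_Omega unfolding adj_def recip_def by (auto simp: algebra_simps abs_minus_commute)

lemma is_vertex_recip: "is_vertex {X, Y, Z} \<Longrightarrow> is_vertex {recip X, recip Y, recip Z}"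
  unfolding is_vertex_iff_adj using adj_recip by blast

lemma edge_rel_recip: "edge_rel X Y Z W \<Longrightarrow> edge_rel (recip X) (recip Y) (recip Z) (recip W)"
  unfolding edge_rel_def using is_vertex_recip recip_recip adj_in_Omega
  by (metis is_vertex_iff_adj)

lemma valid_coloring_recip:
  assumes "valid_coloring col ecol"
  shows "valid_coloring (\<lambda>X. col (recip X)) (\<lambda>e. ecol (recip ` e))"
proof -
  have "col (recip X) \<in> {1, 2, 3}" if "X \<in> Omega" for X
    using assms recip_Omega[OF that] unfolding valid_coloring_def by blast
  moreover have "ecol (recip ` e) \<in> {1, 2, 3}" if e: "e \<in> Edges" for e
  proof -
    obtain X Y where "e = {X, Y}" "adj X Y" using e unfolding Edges_def by blast
    then have "recip ` e = {recip X, recip Y}" "adj (recip X) (recip Y)" using adj_recip by auto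
    then have "recip ` e \<in> Edges" unfolding Edges_def by blast
    then show ?thesis using assms unfolding valid_coloring_def by blast
  qed
  moreover have "ecol (recip ` {X, Y}) = col (recip Z) \<and> col (recip Z) = col (recip W) \<and>
      ecol (recip ` {X, Y}) \<noteq> col (recip X) \<and> ecol (recip ` {X, Y}) \<noteq> col (recip Y) \<and>
      col (recip X) \<noteq> col (recip Y)" if "edge_rel X Y Z W" for X Y Z W
  proof -
    have e: "edge_rel (recip X) (recip Y) (recip Z) (recip W)" using that by (rule edge_rel_recip)
    have "recip ` {X, Y} = {recip X, recip Y}" by simp
    then show ?thesis using colour_edge_rel[OF assms e] by metis
  qed
  ultimately show ?thesis unfolding valid_coloring_def by blast
qed

lemma markoff_map_recip:
  assumes "markoff_map mu (\<lambda>X. col (recip X)) (\<lambda>e. ecol (recip ` e)) \<psi>"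
  shows "markoff_map mu col ecol (\<lambda>X. \<psi> (recip X))"
proof -
  obtain p q r s where mu: "mu = (p, q, r, s)" by (cases mu)
  have vertex: "is_vertex {recip X, recip Y, recip Z} \<and>
      col (recip (recip X)) = col X \<and> col (recip (recip Y)) = col Y \<and> col (recip (recip Z)) = col Z"
    if "is_vertex {X, Y, Z}" for X Y Z
  proof -
    have "X \<in> Omega" "Y \<in> Omega" "Z \<in> Omega"
      using that adj_in_Omega unfolding is_vertex_iff_adj by blast+
    then show ?thesis using is_vertex_recip[OF that] recip_recip by simp
  qed
  have edge: "edge_rel (recip X) (recip Y) (recip Z) (recip Z') \<and> recip ` {recip X, recip Y} = {X, Y}"
    if "edge_rel X Y Z Z'" for X Y Z Z'
    using edge_rel_recip[OF that] edge_rel_in_Omega[OF that] recip_recip by simp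
  have A1: "\<forall>X Y Z. is_vertex {X, Y, Z} \<and> col (recip X) = 1 \<and> col (recip Y) = 2 \<and> col (recip Z) = 3 \<longrightarrow>
      (\<psi> X)\<^sup>2 + (\<psi> Y)\<^sup>2 + (\<psi> Z)\<^sup>2 + \<psi> X * \<psi> Y * \<psi> Z = p * \<psi> X + q * \<psi> Y + r * \<psi> Z + s"
    and A2: "\<forall>Y Z X X'. edge_rel Y Z X X' \<and> ecol (recip ` {Y, Z}) = 1 \<longrightarrow> \<psi> X + \<psi> X' = p - \<psi> Y * \<psi> Z"
    and A3: "\<forall>X Z Y Y'. edge_rel X Z Y Y' \<and> ecol (recip ` {X, Z}) = 2 \<longrightarrow> \<psi> Y + \<psi> Y' = q - \<psi> X * \<psi> Z"
    and A4: "\<forall>X Y Z Z'. edge_rel X Y Z Z' \<and> ecol (recip ` {X, Y}) = 3 \<longrightarrow> \<psi> Z + \<psi> Z' = r - \<psi> X * \<psi> Y"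
    using assms unfolding markoff_map_def mu prod.case by blast+
  show ?thesis
    unfolding markoff_map_def mu prod.case
  proof (intro conjI allI impI)
    fix X Y Z assume "is_vertex {X, Y, Z} \<and> col X = 1 \<and> col Y = 2 \<and> col Z = 3"
    then show "(\<psi> (recip X))\<^sup>2 + (\<psi> (recip Y))\<^sup>2 + (\<psi> (recip Z))\<^sup>2 + \<psi> (recip X) * \<psi> (recip Y) * \<psi> (recip Z)
        = p * \<psi> (recip X) + q * \<psi> (recip Y) + r * \<psi> (recip Z) + s"
      using A1[rule_format, of "recip X" "recip Y" "recip Z"] vertex[of X Y Z] by simp
  next
    fix Y Z X X' assume "edge_rel Y Z X X' \<and> ecol {Y, Z} = 1"
    then show "\<psi> (recip X) + \<psi> (recip X') = p - \<psi> (recip Y) * \<psi> (recip Z)"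
      using A2[rule_format, of "recip Y" "recip Z" "recip X" "recip X'"] edge[of Y Z X X'] by simp
  next
    fix X Z Y Y' assume "edge_rel X Z Y Y' \<and> ecol {X, Z} = 2"
    then show "\<psi> (recip Y) + \<psi> (recip Y') = q - \<psi> (recip X) * \<psi> (recip Z)"
      using A3[rule_format, of "recip X" "recip Z" "recip Y" "recip Y'"] edge[of X Z Y Y'] by simp
  next
    fix X Y Z Z' assume "edge_rel X Y Z Z' \<and> ecol {X, Y} = 3"
    then show "\<psi> (recip Z) + \<psi> (recip Z') = r - \<psi> (recip X) * \<psi> (recip Y)"
      using A4[rule_format, of "recip X" "recip Y" "recip Z" "recip Z'"] edge[of X Y Z Z'] by simp
  qed
qed

lemma BQ_recip:
  assumes "BQ \<psi> L"
  shows "BQ (\<lambda>X. \<psi> (recip X)) L"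
proof -
  have "{X \<in> Omega. norm (\<psi> (recip X)) \<le> L} \<subseteq> recip ` {Y \<in> Omega. norm (\<psi> Y) \<le> L}"
  proof
    fix X assume X: "X \<in> {X \<in> Omega. norm (\<psi> (recip X)) \<le> L}"
    then have "recip (recip X) = X" "recip X \<in> {Y \<in> Omega. norm (\<psi> Y) \<le> L}"
      using recip_Omega recip_recip by auto
    then show "X \<in> recip ` {Y \<in> Omega. norm (\<psi> Y) \<le> L}" by (metis image_eqI)
  qed
  moreover have "finite {Y \<in> Omega. norm (\<psi> Y) \<le> L}" using assms unfolding BQ_def by simp
  ultimately have "finite {X \<in> Omega. norm (\<psi> (recip X)) \<le> L}" by (rule finite_surj[rotated])
  then show ?thesis using assms recip_Omega unfolding BQ_def by blast
qed

lemma real_BQ_markoff_map_exists: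
  fixes p q r s L :: real
  assumes coloring: "valid_coloring col ecol" and nonzero: "(p, q, r) \<noteq> (0, 0, 0)"
  shows "\<exists>\<phi>. markoff_map (of_real p, of_real q, of_real r, of_real s) col ecol \<phi> \<and>
    (\<forall>X\<in>Omega. \<phi> X \<in> \<real>) \<and> BQ \<phi> L"
proof (cases "colour_coeff p q r (col (0, 1)) \<noteq> 0 \<or> colour_coeff p q r (col (1, 1)) \<noteq> 0")
  case True
  then show ?thesis using real_BQ_markoff_map_exists_integers[OF coloring] by blast
next
  case False
  text \<open>Then the colour of \<open>\<infinity>\<close> has nonzero coefficient, and we work in the reflected tree.\<close>
  have "colour_coeff p q r (col (1, 0)) \<noteq> 0"
    using False nonzero colours_vertex[OF coloring base_vertex] unfolding colour_coeff_def
    by (auto split: if_splits)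
  moreover have "recip (0, 1) = (1, 0)" unfolding recip_def by simp
  ultimately obtain \<psi> where
    "markoff_map (of_real p, of_real q, of_real r, of_real s) (\<lambda>X. col (recip X)) (\<lambda>e. ecol (recip ` e)) \<psi>"
    "\<forall>X\<in>Omega. \<psi> X \<in> \<real>" "BQ \<psi> L"
    using real_BQ_markoff_map_exists_integers[OF valid_coloring_recip[OF coloring]] by fastforce
  then show ?thesis using markoff_map_recip BQ_recip recip_Omega by blast
qed

lemma GT_of_real:
  "GT (of_real a) (of_real b) (of_real c) (of_real d)
    = (of_real (a * b + c * d), of_real (a * d + b * c), of_real (a * c + b * d),
       of_real (4 - a\<^sup>2 - b\<^sup>2 - c\<^sup>2 - d\<^sup>2 - a * b * c * d))"
  unfolding GT_def by simp

theorem theorem5p3: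
  fixes a b c d m :: real
    and col :: "region \<Rightarrow> nat" and ecol :: "region set \<Rightarrow> nat"
  assumes coloring: "valid_coloring col ecol"
    and nonzero: "(case GT a b c d of (p, q, r, s) \<Rightarrow> (p, q, r) \<noteq> (0, 0, 0))"
    and m: "sink_constant (GT a b c d) col ecol m"
  shows "\<exists>\<phi>. markoff_map (GT a b c d) col ecol \<phi> \<and> (\<forall>X\<in>Omega. \<phi> X \<in> \<real>) \<and>
             BQ \<phi> (L_const a b c d m)"
proof -
  have "(a * b + c * d, a * d + b * c, a * c + b * d) \<noteq> (0, 0, 0)"
    using nonzero unfolding GT_of_real prod.case prod.inject of_real_eq_0_iff .
  from real_BQ_markoff_map_exists[OF coloring this, of "4 - a\<^sup>2 - b\<^sup>2 - c\<^sup>2 - d\<^sup>2 - a * b * c * d"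
      "L_const a b c d m"]
  show ?thesis unfolding GT_of_real .
qed

end
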